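(* In the reward setting described in the context, for every choice of $\bar d\le D/2$ there is an instance (whose second largest expected delay is $\bar d$) for which every algorithm has pseudo-regret $\Omega(\bar d)$.
   Context: Delay-as-payoff bandit: there are $K$ arms, a horizon $T$ and a maximum delay $D$. Each arm $i$ has a distribution $\mathcal{D}_i$ on $\{0,1,\dots,D\}$; at each step $t$ the agent chooses $i_t$ based on observed feedback, a delay $d_t\sim\mathcal{D}_{i_t}$ is drawn independently and revealed only at time $t+d_t$; the payoff is the reward $r_t=d_t/D$, to be maximized. Let $\mu(i)=\mathbb{E}_{X\sim\mathcal{D}_i}[X/D]$, $d(i)=D\mu(i)$, $\mu^*=\max_i\mu(i)$, and $\bar d$ the second largest value among $d(1),\dots,d(K)$. Pseudo-regret: $T\mu^*-\mathbb{E}[\sum_{t=1}^T r_t]$. *)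

theory Defs
  imports "HOL-Probability.Probability"
begin

text \<open>Delay-as-payoff bandit. Arms are indexed by 0..K-1, rounds by 0..T-1.
  An instance is a family of delay distributions P :: nat \<Rightarrow> nat pmf
  (only arms i < K are relevant).\<close>

definition valid_instance :: "nat \<Rightarrow> nat \<Rightarrow> (nat \<Rightarrow> nat pmf) \<Rightarrow> bool" where
  "valid_instance K D P \<longleftrightarrow> (\<forall>i<K. set_pmf (P i) \<subseteq> {..D})"

definition mean_delay :: "(nat \<Rightarrow> nat pmf) \<Rightarrow> nat \<Rightarrow> real" where
  "mean_delay P i = measure_pmf.expectation (P i) real"

definition mu :: "nat \<Rightarrow> (nat \<Rightarrow> nat pmf) \<Rightarrow> nat \<Rightarrow> real" where
  "mu D P i = measure_pmf.expectation (P i) (\<lambda>x. real x / real D)"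

definition mu_star :: "nat \<Rightarrow> nat \<Rightarrow> (nat \<Rightarrow> nat pmf) \<Rightarrow> real" where
  "mu_star K D P = Max ((mu D P) ` {..<K})"

definition second_largest :: "nat \<Rightarrow> (nat \<Rightarrow> real) \<Rightarrow> real" where
  "second_largest K f = sort (map f [0..<K]) ! (K - 2)"

text \<open>A history is the list of (arm pulled, realised delay) for rounds 0..t-1.
  What the agent observes before choosing in round t: for each past round s < t
  the arm it pulled, and the delay d_s if it has been revealed, i.e. s + d_s \<le> t.\<close>
definition observe :: "nat \<Rightarrow> (nat \<times> nat) list \<Rightarrow> (nat \<times> nat option) list" where
  "observe t h = map (\<lambda>(s, (i, d)). (i, if s + d \<le> t then Some d else None))
                   (zip [0..<length h] h)"

text \<open>A (possibly randomised) algorithm: in round t, given the observations,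
  a distribution over arms.\<close>
type_synonym policy = "nat \<Rightarrow> (nat \<times> nat option) list \<Rightarrow> nat pmf"

definition valid_policy :: "nat \<Rightarrow> policy \<Rightarrow> bool" where
  "valid_policy K pol \<longleftrightarrow> (\<forall>t obs. set_pmf (pol t obs) \<subseteq> {..<K})"

primrec run :: "policy \<Rightarrow> (nat \<Rightarrow> nat pmf) \<Rightarrow> nat \<Rightarrow> (nat \<times> nat) list pmf" where
  "run pol P 0 = return_pmf []"
| "run pol P (Suc t) =
     bind_pmf (run pol P t) (\<lambda>h.
       bind_pmf (pol t (observe t h)) (\<lambda>i.
         map_pmf (\<lambda>d. h @ [(i, d)]) (P i)))"

definition total_reward :: "nat \<Rightarrow> (nat \<times> nat) list \<Rightarrow> real" where
  "total_reward D h = sum_list (map (\<lambda>(i, d). real d / real D) h)"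

definition pseudo_regret :: "nat \<Rightarrow> nat \<Rightarrow> nat \<Rightarrow> (nat \<Rightarrow> nat pmf) \<Rightarrow> policy \<Rightarrow> real" where
  "pseudo_regret K D T P pol =
     real T * mu_star K D P - measure_pmf.expectation (run pol P T) (total_reward D)"

end

theory Submission
  imports Defs
begin

text \<open>Let arm \<open>a\<close> always return the maximal delay \<open>D\<close> (reward 1) and every other arm
  return \<open>\<lfloor>dbar\<rfloor>\<close> or \<open>\<lfloor>dbar\<rfloor> + 1\<close> with mean \<open>dbar\<close> (reward at most 1/2). No delay is
  shorter than \<open>\<lfloor>dbar\<rfloor>\<close>, so during its first \<open>w = max 1 \<lfloor>dbar\<rfloor>\<close> rounds the agent receives no
  feedback at all and the distribution of its first \<open>w\<close> pulls does not depend on \<open>a\<close>. One of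
  the arms 0 and 1 is avoided in expectation at least \<open>w/2\<close> times in these rounds; if it is
  the good arm, every avoidance costs at least 1/2, so the regret is at least
  \<open>w/4 \<ge> dbar/8\<close>.\<close>

lemma expectation_bind_pmf_finite:
  fixes g :: "'b \<Rightarrow> real"
  assumes "finite (set_pmf p)" "\<And>x. x \<in> set_pmf p \<Longrightarrow> finite (set_pmf (f x))"
  shows "measure_pmf.expectation (bind_pmf p f) g =
         measure_pmf.expectation p (\<lambda>x. measure_pmf.expectation (f x) g)"
  using assms
  by (subst pmf_expectation_bind[of "set_pmf p"], simp_all,
      subst integral_measure_pmf[of "set_pmf p"], auto)

lemma finite_set_pmf_policy:
  "valid_policy K pol \<Longrightarrow> finite (set_pmf (pol t obs))"
  unfolding valid_policy_def by (meson finite_lessThan finite_subset)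

lemma set_pmf_runD:
  "h \<in> set_pmf (run pol P t) \<Longrightarrow>
     length h = t \<and> (\<forall>(i, d)\<in>set h. d \<in> set_pmf (P i))"
  by (induction t arbitrary: h) fastforce+

lemma finite_set_pmf_run:
  assumes "valid_policy K pol" "\<And>i. finite (set_pmf (P i))"
  shows "finite (set_pmf (run pol P t))"
  using assms finite_set_pmf_policy[OF assms(1)] by (induction t) simp_all

lemma expectation_run_Suc:
  fixes F :: "(nat \<times> nat) list \<Rightarrow> real"
  assumes pol: "valid_policy K pol" and P: "\<And>i. finite (set_pmf (P i))"
  shows "measure_pmf.expectation (run pol P (Suc t)) F =
    measure_pmf.expectation (run pol P t) (\<lambda>h. measure_pmf.expectation (pol t (observe t h))
       (\<lambda>i. measure_pmf.expectation (P i) (\<lambda>d. F (h @ [(i, d)]))))"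
  using finite_set_pmf_run[OF assms] finite_set_pmf_policy[OF pol] P
  by (simp add: expectation_bind_pmf_finite)

lemma expectation_run_sum:
  fixes \<phi> :: "nat \<Rightarrow> nat \<Rightarrow> real"
  assumes pol: "valid_policy K pol" and P: "\<And>i. finite (set_pmf (P i))"
  shows "measure_pmf.expectation (run pol P t) (\<lambda>h. \<Sum>(i, d)\<leftarrow>h. \<phi> i d) =
         measure_pmf.expectation (run pol P t)
           (\<lambda>h. \<Sum>(i, d)\<leftarrow>h. measure_pmf.expectation (P i) (\<phi> i))"
proof (induction t)
  case 0
  then show ?case by simp
next
  case (Suc t)
  let ?E = "measure_pmf.expectation (run pol P t)"
  let ?next = "\<lambda>h. measure_pmf.expectation (pol t (observe t h))
                 (\<lambda>i. measure_pmf.expectation (P i) (\<phi> i))"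
  have int: "integrable (measure_pmf (run pol P t)) f" for f :: "_ \<Rightarrow> real"
    by (simp add: integrable_measure_pmf_finite finite_set_pmf_run[OF pol P])
  have "measure_pmf.expectation (run pol P (Suc t)) (\<lambda>h. \<Sum>(i, d)\<leftarrow>h. \<phi> i d) =
        ?E (\<lambda>h. (\<Sum>(i, d)\<leftarrow>h. \<phi> i d) + ?next h)"
    unfolding expectation_run_Suc[OF pol P] using P finite_set_pmf_policy[OF pol]
    by (intro Bochner_Integration.integral_cong) (simp_all add: integrable_measure_pmf_finite)
  also have "\<dots> = ?E (\<lambda>h. \<Sum>(i, d)\<leftarrow>h. \<phi> i d) + ?E ?next"
    by (simp add: int)
  also have "\<dots> = ?E (\<lambda>h. \<Sum>(i, d)\<leftarrow>h. measure_pmf.expectation (P i) (\<phi> i)) + ?E ?next"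
    by (simp only: Suc)
  also have "\<dots> = ?E (\<lambda>h. (\<Sum>(i, d)\<leftarrow>h. measure_pmf.expectation (P i) (\<phi> i)) + ?next h)"
    by (simp add: int)
  also have "\<dots> = measure_pmf.expectation (run pol P (Suc t))
                    (\<lambda>h. \<Sum>(i, d)\<leftarrow>h. measure_pmf.expectation (P i) (\<phi> i))"
    unfolding expectation_run_Suc[OF pol P] using P finite_set_pmf_policy[OF pol]
    by (intro Bochner_Integration.integral_cong) (simp_all add: integrable_measure_pmf_finite)
  finally show ?case .
qed

lemma map_pmf_take_run:
  "w \<le> t \<Longrightarrow> map_pmf (take w) (run pol P t) = run pol P w"
proof (induction t)
  case 0
  then show ?case by simp
next
  case (Suc t)
  show ?case
  proof (cases "w = Suc t")
    case True
    then show ?thesis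
      by (subst map_pmf_cong[where g=id]) (auto dest: set_pmf_runD)
  next
    case False
    then have w: "w \<le> t" using Suc by simp
    have "map_pmf (take w) (run pol P (Suc t)) = map_pmf (take w) (run pol P t)"
      unfolding run.simps map_bind_pmf map_pmf_def[of "take w" "run pol P t"]
      using w by (intro bind_pmf_cong) (auto dest!: set_pmf_runD
          simp: map_bind_pmf map_pmf_comp map_pmf_def bind_return_pmf bind_assoc_pmf bind_pmf_const)
    then show ?thesis using Suc w by simp
  qed
qed

lemma observe_all_hidden:
  assumes "\<forall>(i, d)\<in>set h. t < d"
  shows "observe t h = map (\<lambda>i. (i, None)) (map fst h)"
proof -
  have "observe t h = map (\<lambda>(s, i, d). (i, None)) (zip [0..<length h] h)"
    unfolding observe_def using assms by (intro map_cong) (auto dest!: set_zip_rightD)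
  also have "\<dots> = map (\<lambda>i. (i, None)) (map fst h)"
    by (rule nth_equalityI) (simp_all add: nth_zip case_prod_unfold)
  finally show ?thesis .
qed

primrec feedback_free_run :: "policy \<Rightarrow> nat \<Rightarrow> nat list pmf" where
  "feedback_free_run pol 0 = return_pmf []"
| "feedback_free_run pol (Suc t) = bind_pmf (feedback_free_run pol t) (\<lambda>as.
     map_pmf (\<lambda>i. as @ [i]) (pol t (map (\<lambda>i. (i, None)) as)))"

lemma length_feedback_free_run:
  "xs \<in> set_pmf (feedback_free_run pol t) \<Longrightarrow> length xs = t"
  by (induction t arbitrary: xs) auto

lemma finite_set_pmf_feedback_free_run:
  "valid_policy K pol \<Longrightarrow> finite (set_pmf (feedback_free_run pol t))"
  using finite_set_pmf_policy by (induction t) simp_all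

lemma map_pmf_arms_run_feedback_free:
  assumes P: "\<And>i. set_pmf (P i) \<subseteq> {m..}"
  shows "t \<le> max 1 m \<Longrightarrow> map_pmf (map fst) (run pol P t) = feedback_free_run pol t"
proof (induction t)
  case 0
  then show ?case by simp
next
  case (Suc t)
  have hidden: "observe t h = map (\<lambda>i. (i, None)) (map fst h)"
    if "h \<in> set_pmf (run pol P t)" for h
  proof (rule observe_all_hidden)
    \<comment> \<open>Round 0 has no past, so it is feedback-free even when \<open>m = 0\<close>.\<close>
    have "t = 0 \<or> t < m" using Suc.prems by auto
    then show "\<forall>(i, d)\<in>set h. t < d"
      using set_pmf_runD[OF that] P by fastforce
  qed
  have "map_pmf (map fst) (run pol P (Suc t)) = bind_pmf (run pol P t) (\<lambda>h.
          map_pmf (\<lambda>i. map fst h @ [i]) (pol t (map (\<lambda>i. (i, None)) (map fst h))))"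
    unfolding run.simps map_bind_pmf
    by (intro bind_pmf_cong)
      (simp_all add: hidden map_bind_pmf map_pmf_comp map_pmf_def[symmetric] bind_return_pmf)
  also have "\<dots> = feedback_free_run pol (Suc t)"
    using Suc by (simp add: bind_map_pmf flip: Suc.IH)
  finally show ?case .
qed

definition unbiased_rounding_pmf :: "real \<Rightarrow> nat pmf" where
  "unbiased_rounding_pmf x =
     map_pmf (\<lambda>b. if b then nat \<lfloor>x\<rfloor> + 1 else nat \<lfloor>x\<rfloor>) (bernoulli_pmf (frac x))"

lemma set_pmf_unbiased_rounding:
  "set_pmf (unbiased_rounding_pmf x) \<subseteq> {nat \<lfloor>x\<rfloor>, nat \<lfloor>x\<rfloor> + 1}"
  by (auto simp: unbiased_rounding_pmf_def)

lemma expectation_unbiased_rounding: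
  assumes "0 \<le> x"
  shows "measure_pmf.expectation (unbiased_rounding_pmf x) real = x"
proof -
  have "real (nat \<lfloor>x\<rfloor>) = of_int \<lfloor>x\<rfloor>" using assms by simp
  moreover have "0 \<le> frac x" "frac x \<le> 1" by (simp_all add: frac_lt_1 less_imp_le)
  ultimately show ?thesis
    by (simp add: unbiased_rounding_pmf_def frac_def algebra_simps)
qed

definition hard_instance :: "nat \<Rightarrow> real \<Rightarrow> nat \<Rightarrow> nat \<Rightarrow> nat pmf" where
  "hard_instance D dbar a i = (if i = a then return_pmf D else unbiased_rounding_pmf dbar)"

lemma set_pmf_hard_instance:
  assumes "0 < D" "0 \<le> dbar" "dbar \<le> real D / 2"
  shows "set_pmf (hard_instance D dbar a i) \<subseteq> {nat \<lfloor>dbar\<rfloor>..D}"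
proof -
  have "real (nat \<lfloor>dbar\<rfloor>) \<le> dbar" using assms(2) by simp
  then have "nat \<lfloor>dbar\<rfloor> + 1 \<le> D" using assms by linarith
  then show ?thesis using set_pmf_unbiased_rounding[of dbar] by (auto simp: hard_instance_def)
qed

lemma mean_delay_hard_instance:
  "0 \<le> dbar \<Longrightarrow> mean_delay (hard_instance D dbar a) i = (if i = a then real D else dbar)"
  by (simp add: mean_delay_def hard_instance_def expectation_unbiased_rounding)

lemma mu_eq_mean_delay: "mu D P i = mean_delay P i / real D"
  by (simp add: mu_def mean_delay_def)

lemma mu_hard_instance:
  assumes "0 < D" "0 \<le> dbar"
  shows "mu D (hard_instance D dbar a) i = (if i = a then 1 else dbar / real D)"
  using assms by (simp add: mu_eq_mean_delay mean_delay_hard_instance)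

lemma mu_star_hard_instance:
  assumes "0 < D" "0 \<le> dbar" "dbar \<le> real D / 2" "a < K"
  shows "mu_star K D (hard_instance D dbar a) = 1"
  unfolding mu_star_def
proof (rule Max_eqI)
  show "1 \<in> mu D (hard_instance D dbar a) ` {..<K}"
    using assms mu_hard_instance[of D dbar a a] by force
  fix y assume "y \<in> mu D (hard_instance D dbar a) ` {..<K}"
  then show "y \<le> 1" using assms mu_hard_instance[of D dbar a] by (auto simp: field_simps)
qed simp

lemma second_largest_single_peak:
  assumes "a < K" "2 \<le> K" "c \<le> b"
  shows "second_largest K (\<lambda>i. if i = a then b else c) = c"
proof -
  let ?f = "\<lambda>i. if i = a then b else c"
  have "[0..<K] = [0..<a] @ [a..<K]"
    using upt_add_eq_append[of 0 a "K - a"] assms(1) by simp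
  also have "[a..<K] = a # [Suc a..<K]"
    using assms(1) by (simp add: upt_conv_Cons)
  finally have "map ?f [0..<K] = map ?f [0..<a] @ b # map ?f [Suc a..<K]"
    by simp
  moreover have "map ?f [0..<a] = replicate a c" "map ?f [Suc a..<K] = replicate (K - Suc a) c"
    by (auto intro: nth_equalityI)
  moreover have "replicate (K - 1) c = replicate a c @ replicate (K - Suc a) c"
    using assms(1) by (simp flip: replicate_add)
  ultimately have "mset (map ?f [0..<K]) = mset (replicate (K - 1) c @ [b])"
    by simp
  moreover have "sorted (replicate (K - 1) c @ [b])"
    using assms(3) by (auto simp: sorted_append)
  ultimately have "sort (map ?f [0..<K]) = replicate (K - 1) c @ [b]"
    by (intro properties_for_sort) simp_all
  moreover have "K - 2 < K - 1"
    using assms(2) by simp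
  ultimately show ?thesis
    by (simp add: second_largest_def nth_append)
qed

lemma second_largest_hard_instance:
  assumes "0 \<le> dbar" "dbar \<le> real D / 2" "a < K" "2 \<le> K"
  shows "second_largest K (mean_delay (hard_instance D dbar a)) = dbar"
proof -
  have "mean_delay (hard_instance D dbar a) = (\<lambda>i. if i = a then real D else dbar)"
    using assms(1) by (simp add: mean_delay_hard_instance fun_eq_iff)
  then show ?thesis
    using assms second_largest_single_peak[of a K dbar "real D"] by simp
qed

definition other_pulls :: "nat \<Rightarrow> nat list \<Rightarrow> nat" where
  "other_pulls a xs = length (filter (\<lambda>i. i \<noteq> a) xs)"

lemma other_pulls_take_le: "other_pulls a (take w xs) \<le> other_pulls a xs"
  unfolding other_pulls_def
  by (metis append_take_drop_id filter_append length_append le_add1)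

lemma length_le_other_pulls_0_1: "length xs \<le> other_pulls 0 xs + other_pulls 1 xs"
  by (induction xs) (auto simp: other_pulls_def)

lemma sum_list_le_length_minus_other_pulls:
  fixes f :: "nat \<Rightarrow> real"
  assumes "\<And>i. f i \<le> 1" "\<And>i. i \<noteq> a \<Longrightarrow> f i \<le> 1 / 2"
  shows "sum_list (map f xs) \<le> real (length xs) - real (other_pulls a xs) / 2"
proof (induction xs)
  case Nil
  then show ?case by (simp add: other_pulls_def)
next
  case (Cons i xs)
  then show ?case
    using assms[of i] by (cases "i = a") (auto simp: other_pulls_def field_simps)
qed

lemma exists_often_avoided_arm:
  assumes "finite (set_pmf p)" "\<And>xs. xs \<in> set_pmf p \<Longrightarrow> length xs = w"
  shows "\<exists>a\<in>{0, 1}. real w / 2 \<le> measure_pmf.expectation p (\<lambda>xs. real (other_pulls a xs))"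
proof (rule ccontr)
  let ?both = "\<lambda>xs. real (other_pulls 0 xs) + real (other_pulls 1 xs)"
  assume "\<not> ?thesis"
  then have "measure_pmf.expectation p ?both < real w"
    using assms(1) by (simp add: integrable_measure_pmf_finite)
  moreover have "real w \<le> measure_pmf.expectation p ?both"
    using assms length_le_other_pulls_0_1
    by (intro measure_pmf.integral_ge_const)
      (auto simp: AE_measure_pmf_iff integrable_measure_pmf_finite simp flip: of_nat_add)
  ultimately show False by simp
qed

lemma expected_total_reward_eq_sum_mu:
  assumes "valid_policy K pol" "\<And>i. finite (set_pmf (P i))"
  shows "measure_pmf.expectation (run pol P t) (total_reward D) =
         measure_pmf.expectation (run pol P t) (\<lambda>h. \<Sum>(i, d)\<leftarrow>h. mu D P i)"
  unfolding total_reward_def mu_def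
  by (rule expectation_run_sum[OF assms, where \<phi> = "\<lambda>i d. real d / real D"])

lemma pseudo_regret_hard_instance_ge:
  assumes pol: "valid_policy K pol" and a: "a < K"
    and D: "0 < D" "0 \<le> dbar" "dbar \<le> real D / 2" and w: "w \<le> T"
  shows "measure_pmf.expectation (run pol (hard_instance D dbar a) w)
           (\<lambda>h. real (other_pulls a (map fst h))) / 2
         \<le> pseudo_regret K D T (hard_instance D dbar a) pol"
proof -
  let ?P = "hard_instance D dbar a"
  let ?E = "measure_pmf.expectation (run pol ?P T)"
  let ?avoided = "\<lambda>h. real (other_pulls a (map fst (take w h)))"
  have fin_P: "finite (set_pmf (?P i))" for i
    using set_pmf_hard_instance[OF D] by (meson finite_atLeastAtMost finite_subset)
  have mu_le: "mu D ?P i \<le> 1" "i \<noteq> a \<Longrightarrow> mu D ?P i \<le> 1 / 2" for i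
    using D by (simp_all add: mu_hard_instance field_simps)
  have int: "integrable (measure_pmf (run pol ?P T)) f" for f :: "_ \<Rightarrow> real"
    by (simp add: integrable_measure_pmf_finite finite_set_pmf_run[OF pol fin_P])
  have "?E (total_reward D) = ?E (\<lambda>h. \<Sum>(i, d)\<leftarrow>h. mu D ?P i)"
    by (rule expected_total_reward_eq_sum_mu[OF pol fin_P])
  also have "\<dots> \<le> ?E (\<lambda>h. real T - ?avoided h / 2)"
  proof (intro integral_mono_AE int, unfold AE_measure_pmf_iff, intro ballI)
    fix h assume h: "h \<in> set_pmf (run pol ?P T)"
    have "(\<Sum>(i, d)\<leftarrow>h. mu D ?P i) = sum_list (map (mu D ?P) (map fst h))"
      by (simp add: case_prod_unfold comp_def)
    also have "\<dots> \<le> real T - real (other_pulls a (map fst h)) / 2"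
      using sum_list_le_length_minus_other_pulls[of "mu D ?P" a "map fst h", OF mu_le]
        set_pmf_runD[OF h] by simp
    also have "\<dots> \<le> real T - ?avoided h / 2"
      using other_pulls_take_le[of a w "map fst h"] by (simp add: take_map)
    finally show "(\<Sum>(i, d)\<leftarrow>h. mu D ?P i) \<le> real T - ?avoided h / 2" .
  qed
  also have "\<dots> = real T - ?E ?avoided / 2"
    by (simp add: int)
  also have "?E ?avoided = measure_pmf.expectation (map_pmf (take w) (run pol ?P T))
                             (\<lambda>h. real (other_pulls a (map fst h)))"
    by (simp add: take_map)
  also have "\<dots> = measure_pmf.expectation (run pol ?P w) (\<lambda>h. real (other_pulls a (map fst h)))"
    unfolding map_pmf_take_run[OF w] ..
  finally show ?thesis
    unfolding pseudo_regret_def mu_star_hard_instance[OF D a] by simp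
qed

lemma exists_hard_instance_regret_ge:
  assumes pol: "valid_policy K pol" and K: "2 \<le> K"
    and D: "0 < D" "0 \<le> dbar" "dbar \<le> real D / 2" and T: "dbar \<le> real T"
  shows "\<exists>a<K. dbar / 8 \<le> pseudo_regret K D T (hard_instance D dbar a) pol"
proof (cases "T = 0")
  case True
  then show ?thesis
    using K T D by (intro exI[of _ 0]) (simp add: pseudo_regret_def total_reward_def)
next
  case False
  define w where "w = max 1 (nat \<lfloor>dbar\<rfloor>)"
  have "real (nat \<lfloor>dbar\<rfloor>) \<le> dbar" "dbar < real (nat \<lfloor>dbar\<rfloor>) + 1"
    using D(2) by linarith+
  then have w: "w \<le> T" "dbar / 2 \<le> real w"
    using False T unfolding w_def by linarith+
  have feedback_free:
    "map_pmf (map fst) (run pol (hard_instance D dbar a) w) = feedback_free_run pol w" for a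
  proof (rule map_pmf_arms_run_feedback_free)
    show "set_pmf (hard_instance D dbar a i) \<subseteq> {nat \<lfloor>dbar\<rfloor>..}" for i
      using set_pmf_hard_instance[OF D, of a i] by auto
  qed (simp add: w_def)
  from exists_often_avoided_arm[OF finite_set_pmf_feedback_free_run[OF pol] length_feedback_free_run]
  obtain a where a: "a \<in> {0, 1}"
    and avoided: "real w / 2 \<le>
      measure_pmf.expectation (feedback_free_run pol w) (\<lambda>xs. real (other_pulls a xs))" ..
  have a_K: "a < K"
    using a K by auto
  have "dbar / 8 \<le> real w / 4"
    using w(2) by simp
  also have "\<dots> \<le> measure_pmf.expectation (run pol (hard_instance D dbar a) w)
                   (\<lambda>h. real (other_pulls a (map fst h))) / 2"
    using avoided unfolding feedback_free[of a, symmetric] by simp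
  also have "\<dots> \<le> pseudo_regret K D T (hard_instance D dbar a) pol"
    by (rule pseudo_regret_hard_instance_ge[OF pol a_K D w(1)])
  finally show ?thesis
    using a_K by blast
qed

theorem theorem5:
  "\<exists>c>0. \<forall>(K::nat) (D::nat) (T::nat) (dbar::real).
     2 \<le> K \<longrightarrow> 0 < D \<longrightarrow> 0 \<le> dbar \<longrightarrow> dbar \<le> real D / 2 \<longrightarrow> dbar \<le> real T \<longrightarrow>
     (\<forall>pol. valid_policy K pol \<longrightarrow>
        (\<exists>P. valid_instance K D P \<and> second_largest K (mean_delay P) = dbar \<and>
             pseudo_regret K D T P pol \<ge> c * dbar))"
proof (intro exI[of _ "1/8::real"] conjI allI impI)
  fix K D T :: nat and dbar :: real and pol
  assume K: "2 \<le> K" and D: "0 < D" "0 \<le> dbar" "dbar \<le> real D / 2"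
    and T: "dbar \<le> real T" and pol: "valid_policy K pol"
  obtain a where "a < K" and regret: "dbar / 8 \<le> pseudo_regret K D T (hard_instance D dbar a) pol"
    using exists_hard_instance_regret_ge[OF pol K D T] by blast
  moreover have "valid_instance K D (hard_instance D dbar a)"
    unfolding valid_instance_def using set_pmf_hard_instance[OF D, of a]
    by (fastforce simp: subset_iff)
  ultimately show "\<exists>P. valid_instance K D P \<and> second_largest K (mean_delay P) = dbar \<and>
                       pseudo_regret K D T P pol \<ge> 1/8 * dbar"
    using second_largest_hard_instance[OF D(2,3) _ K]
    by (intro exI[of _ "hard_instance D dbar a"]) simp
qed simp

end
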